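(* Consider MALIQUANT. Then, $\mathcal{SG}(0)=0$ and, for all $n\in \mathbb{N}$, $\mathcal{SG}(n)=i_o(n)$.
   Context: MALIQUANT is the impartial normal-play game on the nonnegative integers where from $n$ a player moves to a nondivisor of $n$ smaller than $n$: $\mathrm{opt}(n)=\{d: 0\le d<n,\ d\nmid n\}$ (in particular $0$ is an option of every $n>0$, and $0$ has no options). $\mathcal{SG}$ denotes the Sprague-Grundy value (mex rule). $i_o:\mathbb{N}\to\mathbb{N}$ is the index of the largest odd factor: if $n=2^k(2m-1)$ then $i_o(n)=m$. *)

theory Defs
  imports Main
begin

definition mex :: "nat set \<Rightarrow> nat" where
  "mex A = (LEAST m. m \<notin> A)"

definition opt :: "nat \<Rightarrow> nat set" where
  "opt n = {d. d < n \<and> \<not> d dvd n}"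

function SG :: "nat \<Rightarrow> nat" where
  "SG n = mex ((\<lambda>d. if d < n then SG d else 0) ` opt n)"
  by auto
termination
  by (relation "measure id") auto

definition i_o :: "nat \<Rightarrow> nat" where
  "i_o n = (THE m. \<exists>k. n = 2 ^ k * (2 * m - 1) \<and> m \<ge> 1)"

end

theory Submission
  imports Defs
begin

text \<open>Write \<open>n = 2^k q\<close> with \<open>q\<close> odd, so that \<open>i_o n = (q + 1) div 2\<close>; we show by strong
  induction that \<open>SG n\<close> is this number.  An option \<open>d = 2^j p\<close> of \<open>n\<close> with the same odd part
  \<open>p = q\<close> would have \<open>j < k\<close> and hence divide \<open>n\<close>, so the value \<open>i_o n\<close> is missing among the
  options.  Every smaller odd \<open>p < q\<close> does occur: \<open>2^k p\<close> is an option unless \<open>p\<close> divides \<open>q\<close>,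
  and then \<open>q \<ge> 3p\<close>, so \<open>2^(k+1) p\<close> is an option.  Together with the option \<open>0\<close> this makes
  every smaller value appear.\<close>

lemma pow2_times_odd_decomposition:
  fixes n :: nat
  assumes "n \<noteq> 0"
  obtains k q where "odd q" "n = 2 ^ k * q"
  using assms
proof (induction n arbitrary: thesis rule: less_induct)
  case (less n)
  show ?case
  proof (cases "even n")
    case True
    then obtain h where h: "n = 2 * h" by blast
    with less.prems(2) have "h < n" "h \<noteq> 0" by auto
    then obtain k q where "odd q" "h = 2 ^ k * q"
      using less.IH by blast
    then show ?thesis using h by (intro less.prems(1)[of q "Suc k"]) auto
  next
    case False
    then show ?thesis by (intro less.prems(1)[of n 0]) auto
  qed
qed

lemma pow2_times_odd_le_inject:
  fixes p q :: nat
  assumes "2 ^ j * p = 2 ^ k * q" "odd p" "j \<le> k"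
  shows "j = k \<and> p = q"
proof -
  have "2 ^ j * p = 2 ^ j * (2 ^ (k - j) * q)"
    using assms(1,3) by (simp add: power_add[symmetric])
  then have "p = 2 ^ (k - j) * q" by simp
  with assms(2) have "k - j = 0" by (cases "k - j") auto
  with assms(3) \<open>p = 2 ^ (k - j) * q\<close> show ?thesis by simp
qed

lemma pow2_times_odd_inject:
  fixes p q :: nat
  assumes "2 ^ j * p = 2 ^ k * q" "odd p" "odd q"
  shows "j = k \<and> p = q"
  using pow2_times_odd_le_inject[OF assms(1,2)] pow2_times_odd_le_inject[OF assms(1)[symmetric] assms(3)]
  by (cases "j \<le> k") auto

lemma i_o_pow2_times_odd:
  fixes q :: nat
  assumes "odd q"
  shows "i_o (2 ^ k * q) = (q + 1) div 2"
  unfolding i_o_def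
proof (rule the_equality)
  have "q = 2 * ((q + 1) div 2) - 1" "(q + 1) div 2 \<ge> 1"
    using assms by presburger+
  then show "\<exists>j. 2 ^ k * q = 2 ^ j * (2 * ((q + 1) div 2) - 1) \<and> (q + 1) div 2 \<ge> 1"
    by metis
next
  fix m assume "\<exists>j. 2 ^ k * q = 2 ^ j * (2 * m - 1) \<and> m \<ge> 1"
  then obtain j where j: "2 ^ k * q = 2 ^ j * (2 * m - 1)" "m \<ge> 1" by blast
  then have "odd (2 * m - 1)" by presburger
  with j(1) assms have "q = 2 * m - 1"
    using pow2_times_odd_inject by blast
  with j(2) show "m = (q + 1) div 2" by presburger
qed

lemma mex_eqI:
  assumes "m \<notin> A" "\<And>v. v < m \<Longrightarrow> v \<in> A"
  shows "mex A = m"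
  unfolding mex_def
  by (rule Least_equality) (use assms in \<open>auto simp: not_less[symmetric]\<close>)

(* The defining equation of SG would be unfolded indefinitely by the simplifier. *)
declare SG.simps [simp del]

lemma SG_0: "SG 0 = 0"
  by (subst SG.simps) (simp add: opt_def mex_def)

lemma SG_eq_mex: "SG n = mex (SG ` opt n)"
  by (subst SG.simps) (auto simp: opt_def intro!: arg_cong[where f = mex] image_cong)

lemma zero_in_opt: "n \<noteq> 0 \<Longrightarrow> 0 \<in> opt n"
  by (simp add: opt_def)

lemma pow2_times_same_less_dvd:
  fixes q :: nat
  assumes "2 ^ j * q < 2 ^ k * q"
  shows "2 ^ j * q dvd 2 ^ k * q"
proof -
  from assms have "j < k" by (cases "j < k") (auto simp: not_less mult_le_mono1)
  then show ?thesis by (simp add: le_imp_power_dvd)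
qed

lemma pow2_times_smaller_odd_nondivisor:
  fixes p q :: nat
  assumes "odd p" "odd q" "p < q"
  obtains j where "2 ^ j * p < 2 ^ k * q" "\<not> 2 ^ j * p dvd 2 ^ k * q"
proof (cases "p dvd q")
  case False
  with assms(3) show ?thesis by (intro that[of k]) auto
next
  case True
  then obtain c where c: "q = p * c" by blast
  have "odd c" using c assms(2) by simp
  moreover have "c \<noteq> 1" using c assms(3) by auto
  ultimately have "c \<ge> 3" by presburger
  then have "p * 3 \<le> q" using c by simp
  with assms(1) have "2 * p < q" using odd_pos by fastforce
  then have "2 ^ Suc k * p < 2 ^ k * q" by simp
  moreover have "\<not> 2 ^ Suc k * p dvd 2 ^ k * q"
  proof
    assume "2 ^ Suc k * p dvd 2 ^ k * q"
    then have "2 ^ k * 2 dvd 2 ^ k * q"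
      by (metis dvd_mult_left mult.commute power_Suc)
    with assms(2) show False by simp
  qed
  ultimately show ?thesis by (rule that)
qed

lemma SG_eq_i_o: "n \<noteq> 0 \<Longrightarrow> SG n = i_o n"
proof (induction n rule: less_induct)
  case (less n)
  obtain k q where q: "odd q" "n = 2 ^ k * q"
    using pow2_times_odd_decomposition[OF less.prems] by blast
  have SG_opt: "SG (2 ^ j * p) = (p + 1) div 2" if "2 ^ j * p \<in> opt n" "odd p" for j p
    using that less.IH[of "2 ^ j * p"] i_o_pow2_times_odd[of p j] by (auto simp: opt_def)
  have "(q + 1) div 2 \<notin> SG ` opt n"
  proof
    assume "(q + 1) div 2 \<in> SG ` opt n"
    then obtain d where d: "d \<in> opt n" "SG d = (q + 1) div 2" by (metis imageE)
    moreover from q(1) have "(q + 1) div 2 \<noteq> 0" by presburger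
    ultimately have "d \<noteq> 0" using SG_0 by metis
    then obtain j p where p: "odd p" "d = 2 ^ j * p"
      using pow2_times_odd_decomposition by blast
    with d SG_opt q(1) have "p = q" by (auto elim!: oddE)
    with d(1) p q(2) show False
      using pow2_times_same_less_dvd by (auto simp: opt_def)
  qed
  moreover have "v \<in> SG ` opt n" if "v < (q + 1) div 2" for v
  proof (cases "v = 0")
    case True
    with less.prems SG_0 zero_in_opt show ?thesis by force
  next
    case False
    with that q(1) have "odd (2 * v - 1)" "2 * v - 1 < q" by presburger+
    then obtain j where "2 ^ j * (2 * v - 1) < n" "\<not> 2 ^ j * (2 * v - 1) dvd n"
      using pow2_times_smaller_odd_nondivisor q by metis
    then have "2 ^ j * (2 * v - 1) \<in> opt n" by (simp add: opt_def)
    moreover have "SG (2 ^ j * (2 * v - 1)) = v"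
      using SG_opt[OF calculation \<open>odd (2 * v - 1)\<close>] False by simp
    ultimately show ?thesis by (metis image_eqI)
  qed
  ultimately have "SG n = (q + 1) div 2"
    unfolding SG_eq_mex[of n] by (rule mex_eqI)
  with q show ?case by (simp add: i_o_pow2_times_odd)
qed

theorem mainTheorem4:
  shows "SG 0 = 0 \<and> (\<forall>n::nat. n \<ge> 1 \<longrightarrow> SG n = i_o n)"
  using SG_0 SG_eq_i_o by auto

end
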